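(* Let $\nu>0$ be a real number. Define integers $s_1=4$ and $s_{k+1}=\lfloor 10^{\nu s_k}\rfloor s_k+1$ for $k\ge 1$. Then for every sequence $(a_n)_{n\ge1}$ with $a_n\in\{1,2\}$ for all $n$, the real number $\xi=\sum_{n=1}^{\infty}a_n10^{-s_n}$ is a $\nu$-Liouville number. In particular $\sum_{n=1}^\infty 10^{-s_n}\in\mathbb{L}^{(\nu)}$.
   Context: A real number $\xi$ is a Liouville number if there exist a sequence of rational numbers $p_k/q_k$ ($p_k,q_k$ integers, $q_k>1$) and a sequence of positive reals $(\omega_k)_k$ with $\omega_k\to\infty$ such that $0<|\xi-p_k/q_k|<q_k^{-\omega_k}$ for all $k$. For a real number $\xi$, let $S(\xi)$ be the set of real numbers $\nu^*\ge 0$ for which there exist a sequence of rationals $p_k/q_k$ (integers $q_k>1$) and a sequence of positive reals $(\omega_k)_k$ such that $0<|\xi-p_k/q_k|<q_k^{-\omega_k}$ for all $k$ and $\omega_k/q_k^{\nu^*}\to\infty$ as $k\to\infty$. For $\nu\in[0,\infty]$, $\xi$ is called a $\nu$-Liouville number if $\xi$ is a Liouville number and $\sup S(\xi)=\nu$; the set of $\nu$-Liouville numbers is denoted $\mathbb{L}^{(\nu)}$. In particular, $\xi$ is an $\infty$-Liouville number iff $S(\xi)=[0,\infty)$. *)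

theory Defs
  imports "HOL-Analysis.Analysis"
begin

definition approx_seq :: "real \<Rightarrow> (nat \<Rightarrow> int) \<Rightarrow> (nat \<Rightarrow> int) \<Rightarrow> (nat \<Rightarrow> real) \<Rightarrow> bool" where
  "approx_seq xi p q \<omega> \<longleftrightarrow>
     (\<forall>k. q k > 1 \<and> \<omega> k > 0 \<and>
          0 < \<bar>xi - real_of_int (p k) / real_of_int (q k)\<bar> \<and>
          \<bar>xi - real_of_int (p k) / real_of_int (q k)\<bar> < real_of_int (q k) powr (- \<omega> k))"

definition liouville :: "real \<Rightarrow> bool" where
  "liouville xi \<longleftrightarrow>
     (\<exists>p q \<omega>. approx_seq xi p q \<omega> \<and> filterlim \<omega> at_top sequentially)"

definition S_set :: "real \<Rightarrow> real set" where
  "S_set xi = {\<nu>s. \<nu>s \<ge> 0 \<and>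
     (\<exists>p q \<omega>. approx_seq xi p q \<omega> \<and>
        filterlim (\<lambda>k. \<omega> k / real_of_int (q k) powr \<nu>s) at_top sequentially)}"

definition nu_liouville :: "ereal \<Rightarrow> real \<Rightarrow> bool" where
  "nu_liouville \<nu> xi \<longleftrightarrow> liouville xi \<and> Sup (ereal ` S_set xi) = \<nu>"

text \<open>The sequence s, shifted to 0-based indexing: lsq nu n = s_(n+1).\<close>
primrec lsq :: "real \<Rightarrow> nat \<Rightarrow> int" where
  "lsq \<nu> 0 = 4"
| "lsq \<nu> (Suc k) = \<lfloor>10 powr (\<nu> * real_of_int (lsq \<nu> k))\<rfloor> * lsq \<nu> k + 1"

end

theory Submission
  imports Defs
begin

(* The partial sums numer m / 10^(s m) approximate xi from below with error of order
   10^(-s (m+1)) = 10^(-(factor m * s m + 1)), where factor m = floor (10 powr (nu * s m)).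
   Read as approximations with denominator q = 10^(s m) and exponent factor m, they put
   every mu < nu into S_set xi.
   Conversely, for m > k0 (where factor k >= 2) the numerator numer m is congruent to the digit a m
   modulo 100, so it shares at most a factor 2 with 10^(s m). Hence a fraction p / q with
   2 q < 10^(s m) differs from numer m / 10^(s m) by at least 1 / (q 10^(s m)), while xi is
   much closer to the latter; so q^omega < 2 q 10^(s m). Taking the least such m, the
   previous scale 10^(s (m-1)) is at most 2 q, and the recursion for s bounds omega by a
   constant times q powr nu. This excludes every mu > nu from S_set xi. *)

lemma liouville_if_zero_in_S_set:
  assumes "0 \<in> S_set xi"
  shows "liouville xi"
proof -
  obtain p q \<omega> where approx: "approx_seq xi p q \<omega>"
    and lim: "filterlim (\<lambda>k. \<omega> k / real_of_int (q k) powr 0) at_top sequentially"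
    using assms unfolding S_set_def by blast
  have "real_of_int (q k) powr 0 = 1" for k
  proof -
    have "q k > 1" using approx unfolding approx_seq_def by blast
    then show ?thesis by simp
  qed
  then show ?thesis
    using approx lim unfolding liouville_def by auto
qed

lemma S_set_subset_if_exponent_bounded:
  assumes "C \<ge> 0"
    and bounded: "\<And>p q \<omega>. q \<ge> 2 \<Longrightarrow>
      \<bar>xi - real_of_int p / real_of_int q\<bar> < real_of_int q powr (- \<omega>) \<Longrightarrow>
      \<omega> \<le> C * real_of_int q powr \<nu>"
  shows "S_set xi \<subseteq> {..\<nu>}"
proof
  fix \<mu> assume "\<mu> \<in> S_set xi"
  then obtain p q \<omega> where approx: "approx_seq xi p q \<omega>"
    and lim: "filterlim (\<lambda>k. \<omega> k / real_of_int (q k) powr \<mu>) at_top sequentially"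
    unfolding S_set_def by blast
  obtain k where k: "C < \<omega> k / real_of_int (q k) powr \<mu>"
    using lim by (auto simp: filterlim_at_top_dense eventually_sequentially)
  define r where "r = real_of_int (q k)"
  have "q k > 1"
    and close: "\<bar>xi - real_of_int (p k) / real_of_int (q k)\<bar> < real_of_int (q k) powr (- \<omega> k)"
    using approx unfolding approx_seq_def by blast+
  then have r: "r \<ge> 2" and \<omega>: "\<omega> k \<le> C * r powr \<nu>"
    using bounded[OF _ close] unfolding r_def by simp_all
  show "\<mu> \<in> {..\<nu>}"
  proof (rule ccontr)
    assume "\<mu> \<notin> {..\<nu>}"
    then have "r powr (\<nu> - \<mu>) \<le> 1"
      using r powr_mono[of "\<nu> - \<mu>" 0 r] by simp
    have "\<omega> k / r powr \<mu> \<le> C * r powr \<nu> / r powr \<mu>"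
      using \<omega> by (intro divide_right_mono) auto
    also have "\<dots> = C * r powr (\<nu> - \<mu>)"
      using r by (simp add: powr_diff)
    also have "\<dots> \<le> C"
      using \<open>C \<ge> 0\<close> \<open>r powr (\<nu> - \<mu>) \<le> 1\<close> by (simp add: mult_left_le)
    finally show False
      using k unfolding r_def by simp
  qed
qed

lemma nu_liouville_if_S_set_between:
  assumes "\<nu> > 0" and "{0..<\<nu>} \<subseteq> S_set xi" and "S_set xi \<subseteq> {..\<nu>}"
  shows "nu_liouville (ereal \<nu>) xi"
  unfolding nu_liouville_def
proof
  show "liouville xi"
    using assms by (intro liouville_if_zero_in_S_set) auto
  have "ereal ` {0..<\<nu>} = {0..<ereal \<nu>}"
  proof (intro subset_antisym subsetI)
    fix x assume "x \<in> {0..<ereal \<nu>}"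
    then show "x \<in> ereal ` {0..<\<nu>}"
      by (cases x) auto
  qed auto
  then have "ereal \<nu> = Sup (ereal ` {0..<\<nu>})"
    using assms(1) by simp
  also have "\<dots> \<le> Sup (ereal ` S_set xi)"
    using assms(2) by (intro Sup_subset_mono image_mono)
  finally have "ereal \<nu> \<le> Sup (ereal ` S_set xi)" .
  moreover have "Sup (ereal ` S_set xi) \<le> ereal \<nu>"
    using assms(3) by (intro Sup_least) auto
  ultimately show "Sup (ereal ` S_set xi) = ereal \<nu>"
    by (rule antisym[rotated])
qed

lemma pow10_dvd_double_if_dvd_mult:
  fixes N q :: int
  assumes "N mod 100 \<in> {1, 2}" and "10 ^ n dvd q * N"
  shows "10 ^ n dvd 2 * q"
proof -
  obtain u where u: "coprime u 10" and N: "N = u \<or> N = 2 * u"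
  proof (cases "N mod 100 = 1")
    case True
    then have "N mod 10 = 1" by presburger
    then show ?thesis using that[of N] by (metis coprime_1_left coprime_mod_left_iff zero_neq_numeral)
  next
    case False
    with assms(1) have "N mod 100 = 2" by simp
    then have "(N div 2) mod 10 = 1" "N = 2 * (N div 2)" by presburger+
    then show ?thesis using that[of "N div 2"] by (metis coprime_1_left coprime_mod_left_iff zero_neq_numeral)
  qed
  have "q * N dvd 2 * q * u" using N by auto
  with assms(2) have "10 ^ n dvd 2 * q * u" by (rule dvd_trans)
  moreover have "coprime (10 ^ n) u" using u by (simp add: coprime_commute)
  ultimately show ?thesis by (simp add: coprime_dvd_mult_left_iff)
qed

lemma powr_less_if_separated:
  fixes x A B r Q \<omega> :: real
  assumes "r > 0" "Q > 0"
    and "1 / (r * Q) \<le> \<bar>A - B\<bar>" and "\<bar>x - B\<bar> < 1 / (2 * r * Q)"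
    and "\<bar>x - A\<bar> < r powr (- \<omega>)"
  shows "r powr \<omega> < 2 * r * Q"
proof -
  define d where "d = 1 / (2 * r * Q)"
  have "2 * d \<le> \<bar>A - B\<bar>" "\<bar>x - B\<bar> < d"
    using assms(3,4) unfolding d_def by simp_all
  then have "d < \<bar>x - A\<bar>"
    by arith
  also have "\<dots> < inverse (r powr \<omega>)"
    using assms(5) by (simp add: powr_minus)
  finally show ?thesis
    using assms(1,2) unfolding d_def by (simp add: field_simps)
qed

lemma exponent_less_if_powr_less:
  fixes r Q \<omega> :: real
  assumes "r \<ge> 2" and "r powr \<omega> < 2 * r * Q" and "Q \<le> r ^ n"
  shows "\<omega> < real n + 2"
proof -
  have "0 < 2 * r * Q"
    using assms(1,2) powr_gt_zero[of r \<omega>] by linarith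
  then have "Q > 0"
    using assms(1) by (simp add: zero_less_mult_iff)
  then have "2 * Q \<le> r * r ^ n"
    using assms(1,3) by (intro mult_mono) auto
  then have "2 * r * Q \<le> r * r * r ^ n"
    using assms(1) mult_left_mono[of "2 * Q" "r * r ^ n" r] by (simp add: mult_ac)
  then have "r powr \<omega> < r * r * r ^ n"
    using assms(2) by linarith
  also have "\<dots> = r powr (real n + 2)"
    using assms(1) by (simp add: powr_add powr_realpow power2_eq_square)
  finally show ?thesis
    using assms(1) by (simp add: powr_less_cancel_iff)
qed

lemma obtain_first_index_from:
  fixes P :: "nat \<Rightarrow> bool"
  assumes "P n" "k \<le> n"
  obtains m where "k \<le> m" "P m" "m = k \<or> \<not> P (m - 1)"
proof -
  define m where "m = (LEAST m. k \<le> m \<and> P m)"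
  have m: "k \<le> m" "P m"
    using LeastI[of "\<lambda>m. k \<le> m \<and> P m" n] assms unfolding m_def by simp_all
  have least: "m \<le> j" if "k \<le> j" "P j" for j
    using Least_le[of "\<lambda>m. k \<le> m \<and> P m" j] that unfolding m_def by simp
  have "\<not> P (m - 1)" if "m \<noteq> k"
    using least[of "m - 1"] m(1) that by linarith
  then show ?thesis
    using that m by blast
qed

locale lsq_sequence =
  fixes \<nu> :: real
  assumes nu_pos: "\<nu> > 0"
begin

lemma lsq_ge_4: "lsq \<nu> k \<ge> 4"
proof (induction k)
  case (Suc k)
  have "10 powr (\<nu> * real_of_int (lsq \<nu> k)) \<ge> 1"
    using Suc nu_pos by (intro ge_one_powr_ge_zero) auto
  then have "\<lfloor>10 powr (\<nu> * real_of_int (lsq \<nu> k))\<rfloor> * lsq \<nu> k \<ge> 1 * 4"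
    using Suc by (intro mult_mono) auto
  then show ?case by simp
qed simp

definition s :: "nat \<Rightarrow> nat" where
  "s k = nat (lsq \<nu> k)"

definition factor :: "nat \<Rightarrow> nat" where
  "factor k = nat \<lfloor>10 powr (\<nu> * real (s k))\<rfloor>"

lemma of_nat_s: "real (s k) = real_of_int (lsq \<nu> k)"
  using lsq_ge_4[of k] by (simp add: s_def)

lemma s_ge_4: "s k \<ge> 4"
  using lsq_ge_4[of k] by (simp add: s_def)

lemma powr_nu_s_ge_1: "10 powr (\<nu> * real (s k)) \<ge> 1"
  using nu_pos by (intro ge_one_powr_ge_zero) auto

lemma factor_ge_1: "factor k \<ge> 1"
  using powr_nu_s_ge_1[of k] unfolding factor_def by linarith

lemma factor_le: "real (factor k) \<le> 10 powr (\<nu> * real (s k))"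
  using powr_nu_s_ge_1[of k] unfolding factor_def by linarith

lemma factor_gt: "real (factor k) > 10 powr (\<nu> * real (s k)) - 1"
  using powr_nu_s_ge_1[of k] unfolding factor_def by linarith

lemma s_Suc: "s (Suc k) = factor k * s k + 1"
proof -
  have "lsq \<nu> (Suc k) = \<lfloor>10 powr (\<nu> * real (s k))\<rfloor> * lsq \<nu> k + 1"
    by (simp add: of_nat_s)
  then show ?thesis
    unfolding s_def factor_def using lsq_ge_4[of k]
    by (simp add: nat_add_distrib nat_mult_distrib)
qed

lemma s_less_s_Suc: "s k < s (Suc k)"
proof -
  have "s k \<le> factor k * s k"
    using factor_ge_1[of k] by simp
  then show ?thesis
    unfolding s_Suc by linarith
qed

lemma s_add_le: "s m + j \<le> s (m + j)"
proof (induction j)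
  case (Suc j)
  then show ?case
    using s_less_s_Suc[of "m + j"] by simp
qed simp

lemma s_ge_index: "k \<le> s k"
  using s_add_le[of 0 k] by simp

lemma s_mono: "m \<le> n \<Longrightarrow> s m \<le> s n"
  using s_add_le[of m "n - m"] by simp

lemma filterlim_s: "filterlim (\<lambda>k. real (s k)) at_top sequentially"
  by (rule filterlim_at_top_mono[OF filterlim_real_sequentially]) (simp add: s_ge_index)

definition k0 :: nat where
  "k0 = nat \<lceil>1 / \<nu>\<rceil>"

lemma factor_ge_2:
  assumes "k0 \<le> k"
  shows "factor k \<ge> 2"
proof -
  have "1 / \<nu> \<le> real k"
    using assms unfolding k0_def by linarith
  then have "1 \<le> \<nu> * real (s k)"
    using nu_pos s_ge_index[of k] by (simp add: field_simps)
      (meson mult_left_mono of_nat_le_iff order.trans less_imp_le)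
  then have "10 powr 1 \<le> 10 powr (\<nu> * real (s k))"
    by (intro powr_mono) auto
  then show ?thesis
    unfolding factor_def by simp linarith
qed

lemma double_s_less_s_Suc:
  assumes "k0 \<le> k"
  shows "2 * s k < s (Suc k)"
  using s_Suc[of k] mult_le_mono1[OF factor_ge_2[OF assms], of "s k"] by linarith


lemma factor_le_powr:
  assumes "10 ^ s k \<le> x"
  shows "real (factor k) \<le> x powr \<nu>"
proof -
  have "real (factor k) \<le> (10 powr real (s k)) powr \<nu>"
    using factor_le[of k] by (simp add: powr_powr mult.commute)
  also have "\<dots> \<le> x powr \<nu>"
    using assms nu_pos by (intro powr_mono2) (auto simp: powr_realpow)
  finally show ?thesis .
qed

lemma ten_pow_s_Suc_le:
  fixes r :: real
  assumes "2 \<le> r" and "10 ^ s k \<le> 2 * r"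
  shows "10 ^ s (Suc k) \<le> r ^ (2 * factor k + 4)"
proof -
  have "(10::real) ^ s (Suc k) = 10 * (10 ^ s k) ^ factor k"
    by (simp add: s_Suc mult.commute[of "factor k"] power_mult)
  also have "\<dots> \<le> 10 * (2 * r) ^ factor k"
    using assms(2) by (intro mult_left_mono power_mono) auto
  also have "\<dots> \<le> r ^ 4 * (r ^ 2) ^ factor k"
  proof (intro mult_mono power_mono)
    show "(10::real) \<le> r ^ 4"
      using power_mono[OF assms(1), of 4] by simp
    show "2 * r \<le> r ^ 2"
      using assms(1) by (simp add: power2_eq_square)
  qed (use assms(1) in simp_all)
  also have "\<dots> = r ^ (2 * factor k + 4)"
    by (simp add: power_add power_mult)
  finally show ?thesis .
qed

end

locale liouville_series = lsq_sequence +
  fixes a :: "nat \<Rightarrow> int"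
  assumes digit: "a n \<in> {1, 2}"
begin

definition summand :: "nat \<Rightarrow> real" where
  "summand n = real_of_int (a n) / 10 ^ s n"

definition xi :: real where
  "xi = suminf summand"

definition tail :: "nat \<Rightarrow> real" where
  "tail m = (\<Sum>i. summand (i + Suc m))"

definition numer :: "nat \<Rightarrow> int" where
  "numer m = (\<Sum>n\<le>m. a n * 10 ^ (s m - s n))"

lemma summand_pos: "summand n > 0"
  using digit[of n] by (auto simp: summand_def)

lemma summand_le: "summand n \<le> 2 / 10 ^ s n"
  using digit[of n] by (auto simp: summand_def divide_right_mono)

lemma summand_ge: "summand n \<ge> 1 / 10 ^ s n"
  using digit[of n] by (auto simp: summand_def divide_right_mono)

lemma summand_le_geometric: "summand (n + j) \<le> (2 / 10 ^ s n) * (1 / 10) ^ j"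
proof -
  have "(10::real) ^ (s n + j) \<le> 10 ^ s (n + j)"
    using s_add_le[of n j] by (intro power_increasing) auto
  then have "2 / 10 ^ s (n + j) \<le> 2 / (10::real) ^ (s n + j)"
    by (intro divide_left_mono) auto
  also have "\<dots> = (2 / 10 ^ s n) * (1 / 10) ^ j"
    by (simp add: power_add power_divide)
  finally show ?thesis
    using summand_le[of "n + j"] by linarith
qed

lemma summable_summand_shift: "summable (\<lambda>i. summand (i + n))"
proof (rule summable_comparison_test)
  show "summable (\<lambda>i. (2 / 10 ^ s n) * (1 / 10::real) ^ i)"
    by (intro summable_mult summable_geometric) auto
  show "\<exists>N. \<forall>i\<ge>N. norm (summand (i + n)) \<le> (2 / 10 ^ s n) * (1 / 10) ^ i"
    using summand_le_geometric[of n] summand_pos by (auto simp: add.commute less_imp_le)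
qed

lemma xi_minus_numer: "xi - real_of_int (numer m) / 10 ^ s m = tail m"
proof -
  have "real_of_int (numer m) / 10 ^ s m = (\<Sum>n\<le>m. summand n)"
    unfolding numer_def of_int_sum sum_divide_distrib
  proof (rule sum.cong)
    fix n assume "n \<in> {..m}"
    then have "(10::real) ^ s m = 10 ^ (s m - s n) * 10 ^ s n"
      using s_mono[of n m] by (simp flip: power_add)
    then show "real_of_int (a n * 10 ^ (s m - s n)) / 10 ^ s m = summand n"
      by (simp add: summand_def)
  qed simp
  moreover have "xi = (\<Sum>n\<le>m. summand n) + tail m"
    using suminf_split_initial_segment[OF summable_summand_shift[of 0], of "Suc m"]
    unfolding xi_def tail_def by (simp add: lessThan_Suc_atMost)
  ultimately show ?thesis
    by simp
qed

lemma tail_ge: "tail m \<ge> 1 / 10 ^ s (Suc m)"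
proof -
  have "(\<Sum>i\<in>{0}. summand (i + Suc m)) \<le> tail m"
    unfolding tail_def
    by (rule sum_le_suminf[OF summable_summand_shift]) (auto intro: less_imp_le summand_pos)
  then show ?thesis
    using summand_ge[of "Suc m"] by simp
qed

lemma tail_pos: "tail m > 0"
  by (rule order_less_le_trans[OF _ tail_ge]) simp

lemma tail_le: "tail m \<le> (20 / 9) / 10 ^ s (Suc m)"
proof -
  have "tail m \<le> (\<Sum>i. (2 / 10 ^ s (Suc m)) * (1 / 10) ^ i)"
    unfolding tail_def
    using summand_le_geometric[of "Suc m"] summable_summand_shift[of "Suc m"]
    by (intro suminf_le summable_mult summable_geometric) (simp_all add: add.commute)
  also have "\<dots> = (2 / 10 ^ s (Suc m)) * (10 / 9)"
    by (subst suminf_mult) (auto simp: suminf_geometric)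
  finally show ?thesis
    by simp
qed

lemma approx_seq_numer: "approx_seq xi numer (\<lambda>k. 10 ^ s k) (\<lambda>k. real (factor k))"
  unfolding approx_seq_def
proof (intro allI conjI)
  fix k
  show "(1::int) < 10 ^ s k"
    using s_ge_4[of k] by (intro one_less_power) auto
  show "0 < real (factor k)"
    using factor_ge_1[of k] by simp
  have close: "xi - real_of_int (numer k) / real_of_int (10 ^ s k) = tail k"
    using xi_minus_numer[of k] by simp
  then show "0 < \<bar>xi - real_of_int (numer k) / real_of_int (10 ^ s k)\<bar>"
    using tail_pos[of k] by simp
  have "real_of_int (10 ^ s k) powr (- real (factor k)) = inverse (10 ^ (factor k * s k))"
    by (simp add: powr_realpow[symmetric] powr_powr powr_minus mult.commute)
  also have "\<dots> = 10 / 10 ^ s (Suc k)"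
    by (simp add: s_Suc field_simps)
  also have "(20 / 9) / 10 ^ s (Suc k) < \<dots>"
    by (intro divide_strict_right_mono) auto
  finally show "\<bar>xi - real_of_int (numer k) / real_of_int (10 ^ s k)\<bar>
      < real_of_int (10 ^ s k) powr - real (factor k)"
    using close tail_le[of k] tail_pos[of k] by simp
qed

lemma S_set_ge:
  assumes "0 \<le> \<mu>" and "\<mu> < \<nu>"
  shows "\<mu> \<in> S_set xi"
proof -
  have lower: "10 powr ((\<nu> - \<mu>) * real (s k)) - 1
      \<le> real (factor k) / real_of_int (10 ^ s k) powr \<mu>" for k
  proof -
    define A where "A = 10 powr ((\<nu> - \<mu>) * real (s k))"
    define B where "B = 10 powr (\<mu> * real (s k))"
    have B: "B \<ge> 1"
      using assms(1) unfolding B_def by (intro ge_one_powr_ge_zero) auto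
    have "real_of_int (10 ^ s k) powr \<mu> = B"
      unfolding B_def by (simp add: powr_realpow[symmetric] powr_powr mult.commute)
    moreover have "A * B - 1 < real (factor k)"
      using factor_gt[of k] unfolding A_def B_def by (simp add: powr_add[symmetric] algebra_simps)
    ultimately have "(A * B - 1) / B \<le> real (factor k) / real_of_int (10 ^ s k) powr \<mu>"
      using B by (simp add: divide_right_mono)
    moreover have "A - 1 \<le> (A * B - 1) / B"
      using B by (simp add: field_simps)
    ultimately show ?thesis
      unfolding A_def by linarith
  qed
  have pow_exp: "10 powr ((\<nu> - \<mu>) * real (s k)) = exp (ln 10 * (\<nu> - \<mu>) * real (s k))" for k
    by (simp add: powr_def mult_ac)
  have "filterlim (\<lambda>k. ln 10 * (\<nu> - \<mu>) * real (s k)) at_top sequentially"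
    using assms(2) by (intro filterlim_tendsto_pos_mult_at_top[OF tendsto_const _ filterlim_s]) simp
  then have "filterlim (\<lambda>k. exp (ln 10 * (\<nu> - \<mu>) * real (s k))) at_top sequentially"
    by (rule filterlim_compose[OF exp_at_top])
  then have "filterlim (\<lambda>k. -1 + exp (ln 10 * (\<nu> - \<mu>) * real (s k))) at_top sequentially"
    by (rule filterlim_tendsto_add_at_top[OF tendsto_const])
  then have "filterlim (\<lambda>k. real (factor k) / real_of_int (10 ^ s k) powr \<mu>) at_top sequentially"
    by (rule filterlim_at_top_mono) (use lower pow_exp in auto)
  then show ?thesis
    unfolding S_set_def using assms(1) approx_seq_numer by blast
qed

lemma numer_mod_100:
  assumes "k0 < m"
  shows "numer m mod 100 = a m mod 100"
proof -
  obtain m' where m: "m = Suc m'" "k0 \<le> m'"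
    using assms by (cases m) auto
  have "100 dvd a n * 10 ^ (s m - s n)" if "n < m" for n
  proof -
    have "s n + 2 \<le> s m"
      using double_s_less_s_Suc[OF m(2)] s_mono[of n m'] s_ge_4[of m'] that m(1) by simp
    then have "\<exists>d. s m - s n = d + 2"
      by presburger
    then obtain d where "s m - s n = d + 2"
      by blast
    then have "(10::int) ^ (s m - s n) = 10 ^ d * 100"
      by (simp add: power_add)
    then show ?thesis
      by simp
  qed
  then have "100 dvd (\<Sum>n<m. a n * 10 ^ (s m - s n))"
    by (intro dvd_sum) auto
  moreover have "numer m = a m + (\<Sum>n<m. a n * 10 ^ (s m - s n))"
    unfolding numer_def by (simp add: lessThan_Suc_atMost[symmetric] m(1))
  ultimately show ?thesis
    by (metis mod_add_right_eq dvd_imp_mod_0 add.right_neutral)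
qed

lemma numer_separated:
  fixes p q :: int
  assumes "k0 < m" and "q \<ge> 1" and "2 * q < 10 ^ s m"
  shows "1 / (real_of_int q * 10 ^ s m)
    \<le> \<bar>real_of_int p / real_of_int q - real_of_int (numer m) / 10 ^ s m\<bar>"
proof -
  have "p * 10 ^ s m \<noteq> q * numer m"
  proof
    assume "p * 10 ^ s m = q * numer m"
    then have "10 ^ s m dvd q * numer m"
      by (metis dvd_triv_right)
    moreover have "numer m mod 100 \<in> {1, 2}"
      using numer_mod_100[OF assms(1)] digit[of m] by auto
    ultimately have "10 ^ s m dvd 2 * q"
      using pow10_dvd_double_if_dvd_mult by blast
    then show False
      using assms(2,3) zdvd_imp_le[of "10 ^ s m" "2 * q"] by linarith
  qed
  then have "1 \<le> \<bar>real_of_int (p * 10 ^ s m - q * numer m)\<bar>"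
    by linarith
  also have "\<dots> = \<bar>p / q - numer m / 10 ^ s m\<bar> * (q * 10 ^ s m)"
    using assms(2) by (simp add: abs_mult field_simps)
  finally show ?thesis
    using assms(2) by (simp add: field_simps)
qed

lemma tail_le_sq:
  assumes "k0 \<le> m"
  shows "tail m \<le> (2 / 9) / (10 ^ s m)\<^sup>2"
proof -
  have "(10::real) * (10 ^ s m)\<^sup>2 = 10 ^ (2 * s m + 1)"
    by (simp add: power_mult[symmetric] mult.commute)
  also have "\<dots> \<le> 10 ^ s (Suc m)"
    using double_s_less_s_Suc[OF assms] by (intro power_increasing) auto
  finally have "(10::real) * (10 ^ s m)\<^sup>2 \<le> 10 ^ s (Suc m)" .
  then have "(20 / 9) / (10::real) ^ s (Suc m) \<le> (20 / 9) / (10 * (10 ^ s m)\<^sup>2)"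
    by (intro divide_left_mono) auto
  then show ?thesis
    using tail_le[of m] by simp
qed

lemma approx_exponent_less:
  fixes p q :: int
  assumes "k0 < m" and "q \<ge> 2" and "2 * q < 10 ^ s m" and "10 ^ s m \<le> real_of_int q ^ n"
    and close: "\<bar>xi - p / q\<bar> < real_of_int q powr (- \<omega>)"
  shows "\<omega> < real n + 2"
proof -
  define Q :: real where "Q = 10 ^ s m"
  define r :: real where "r = real_of_int q"
  have "Q > 0" "r \<ge> 2"
    using assms(2) unfolding Q_def r_def by simp_all
  have rQ: "2 * r < Q"
    using assms(3) unfolding Q_def r_def by (metis of_int_less_iff of_int_mult of_int_numeral of_int_power)
  have "\<bar>xi - numer m / Q\<bar> = tail m"
    using xi_minus_numer[of m] tail_pos[of m] unfolding Q_def by simp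
  also have "\<dots> \<le> (2 / 9) / Q\<^sup>2"
    using tail_le_sq[of m] assms(1) unfolding Q_def by simp
  also have "\<dots> < 1 / (2 * r * Q)"
    using rQ \<open>r \<ge> 2\<close> by (simp add: field_simps power2_eq_square)
  finally have "r powr \<omega> < 2 * r * Q"
    using numer_separated[OF assms(1), of q p] assms(2,3) close \<open>Q > 0\<close> \<open>r \<ge> 2\<close>
    by (intro powr_less_if_separated[where A = "p / r" and B = "numer m / Q" and x = xi])
      (simp_all add: Q_def r_def)
  then show ?thesis
    using assms(2,4) by (intro exponent_less_if_powr_less) (simp_all add: Q_def r_def)
qed

lemma obtain_first_scale:
  fixes q :: int
  obtains m where "k0 < m" "2 * q < 10 ^ s m" "m = Suc k0 \<or> 10 ^ s (m - 1) \<le> 2 * q"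
proof -
  define j where "j = Suc k0 + nat (2 * q)"
  have "2 * q \<le> int j"
    unfolding j_def by simp
  also have "\<dots> \<le> int (s j)"
    using s_ge_index[of j] by simp
  also have "\<dots> < 2 ^ s j"
    by (rule of_nat_less_two_power)
  also have "\<dots> \<le> 10 ^ s j"
    by (rule power_mono) simp_all
  finally have "2 * q < 10 ^ s j" .
  moreover have "Suc k0 \<le> j"
    unfolding j_def by simp
  ultimately obtain m where "Suc k0 \<le> m" "2 * q < 10 ^ s m"
    and "m = Suc k0 \<or> \<not> 2 * q < 10 ^ s (m - 1)"
    by (rule obtain_first_index_from[where P = "\<lambda>m. 2 * q < 10 ^ s m"])
  then show ?thesis
    using that[of m] by (simp add: Suc_le_eq not_less)
qed

definition exponent_const :: real where
  "exponent_const = max (real (4 * s (Suc k0)) + 2) (6 + 2 * 2 powr \<nu>)"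

lemma approx_exponent_le:
  fixes p q :: int
  assumes "q \<ge> 2" and close: "\<bar>xi - p / q\<bar> < real_of_int q powr (- \<omega>)"
  shows "\<omega> \<le> exponent_const * real_of_int q powr \<nu>"
proof -
  define r where "r = real_of_int q"
  have r: "r \<ge> 2" "r powr \<nu> \<ge> 1"
    using assms(1) nu_pos unfolding r_def by (auto intro: ge_one_powr_ge_zero)
  obtain m where m: "k0 < m" "2 * q < 10 ^ s m" and first: "m = Suc k0 \<or> 10 ^ s (m - 1) \<le> 2 * q"
    by (rule obtain_first_scale)
  have "\<omega> \<le> real (4 * s (Suc k0)) + 2 \<or> \<omega> \<le> (6 + 2 * 2 powr \<nu>) * r powr \<nu>"
  proof (cases "m = Suc k0")
    case True
    have "(10::real) ^ s m \<le> (r ^ 4) ^ s m"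
      using power_mono[OF r(1), of 4] by (intro power_mono) auto
    then have "\<omega> < real (4 * s m) + 2"
      using m assms(1) close unfolding r_def by (intro approx_exponent_less) (auto simp: power_mult)
    then show ?thesis
      using True by simp
  next
    case False
    then obtain m' where m': "m = Suc m'" and "10 ^ s m' \<le> 2 * q"
      using first m(1) by (cases m) auto
    then have "real_of_int (10 ^ s m') \<le> real_of_int (2 * q)"
      by (simp only: of_int_le_iff)
    then have "10 ^ s m' \<le> 2 * r"
      unfolding r_def by simp
    then have "\<omega> < real (2 * factor m' + 4) + 2"
      using m m'(1) assms(1) close ten_pow_s_Suc_le[OF r(1)] unfolding r_def
      by (intro approx_exponent_less) auto
    moreover have "real (factor m') \<le> 2 powr \<nu> * r powr \<nu>"
      using factor_le_powr[OF \<open>10 ^ s m' \<le> 2 * r\<close>] r(1) by (simp add: powr_mult)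
    ultimately show ?thesis
      using r(2) by (simp add: algebra_simps)
  qed
  moreover have "real (4 * s (Suc k0)) + 2 \<le> exponent_const * r powr \<nu>"
    using mult_left_mono[OF r(2), of exponent_const] unfolding exponent_const_def by simp
  moreover have "(6 + 2 * 2 powr \<nu>) * r powr \<nu> \<le> exponent_const * r powr \<nu>"
    using r(2) unfolding exponent_const_def by (intro mult_right_mono) auto
  ultimately show ?thesis
    unfolding r_def by linarith
qed

lemma S_set_le: "S_set xi \<subseteq> {..\<nu>}"
  by (rule S_set_subset_if_exponent_bounded[OF _ approx_exponent_le]) (auto simp: exponent_const_def)

lemma nu_liouville_xi: "nu_liouville (ereal \<nu>) xi"
  using nu_pos S_set_ge S_set_le by (intro nu_liouville_if_S_set_between) auto

lemma xi_eq: "xi = (\<Sum>n. real_of_int (a n) * 10 powr (- real_of_int (lsq \<nu> n)))"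
  unfolding xi_def summand_def
  by (simp add: of_nat_s[symmetric] powr_minus powr_realpow divide_inverse)

end

theorem mainTheorem1:
  fixes \<nu> :: real
  assumes "\<nu> > 0"
  shows "(\<forall>a :: nat \<Rightarrow> int. (\<forall>n. a n \<in> {1, 2}) \<longrightarrow>
            nu_liouville (ereal \<nu>)
              (\<Sum>n. real_of_int (a n) * 10 powr (- real_of_int (lsq \<nu> n))))
         \<and> nu_liouville (ereal \<nu>) (\<Sum>n. 10 powr (- real_of_int (lsq \<nu> n)))"
proof -
  have series: "nu_liouville (ereal \<nu>) (\<Sum>n. real_of_int (a n) * 10 powr (- real_of_int (lsq \<nu> n)))"
    if "\<forall>n. a n \<in> {1, 2}" for a :: "nat \<Rightarrow> int"
  proof -
    interpret liouville_series \<nu> a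
      using assms that by unfold_locales auto
    show ?thesis
      using nu_liouville_xi xi_eq by simp
  qed
  then show ?thesis
    using series[of "\<lambda>_. 1"] by simp
qed

end
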